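(* Let $g,p,q$ be real univariate polynomials with $\deg(g)=m$, $\deg(p)=2d$ and $\deg(q)=2d-2m$, such that $p$ and $q$ are sums of squares and $g$ and $q$ are coprime. Then there exists a sum of squares polynomial $s\in\Sigma[x]_{2m}$ such that $p\equiv sq\pmod g$.
   Context: $\Sigma[x]_{2m}$ denotes the cone of real univariate polynomials of degree at most $2m$ that are sums of squares of real polynomials (of degree at most $m$). $a\equiv b\pmod g$ means $a=b+wg$ for some real polynomial $w$. Coprime means the greatest common divisor is a constant. *)

theory Defs
  imports "HOL-Computational_Algebra.Polynomial"
begin

definition is_sos :: "real poly \<Rightarrow> bool" where
  "is_sos p \<longleftrightarrow> (\<exists>fs :: real poly list. p = (\<Sum>f\<leftarrow>fs. f ^ 2))"

definition sos_cone :: "nat \<Rightarrow> real poly set" where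
  "sos_cone k = {p. \<exists>fs :: real poly list. (\<forall>f\<in>set fs. 2 * degree f \<le> k) \<and> p = (\<Sum>f\<leftarrow>fs. f ^ 2)}"

definition poly_cong :: "real poly \<Rightarrow> real poly \<Rightarrow> real poly \<Rightarrow> bool" where
  "poly_cong a b g \<longleftrightarrow> (\<exists>w. a = b + w * g)"

end

theory Submission
  imports Defs "HOL-Computational_Algebra.Polynomial_Factorial" "HOL-Computational_Algebra.Field_as_Ring"
begin

text \<open>If \<open>u\<close> inverts \<open>q\<close> modulo \<open>g\<close>, then \<open>p \<equiv> (p u\<^sup>2 q) q\<close>, and \<open>p u\<^sup>2 q\<close> is again a sum
  of squares \<open>\<Sum> r\<^sub>i\<^sup>2\<close>. Replacing every \<open>r\<^sub>i\<close> by its remainder modulo \<open>g\<close> does not change the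
  class modulo \<open>g\<close> and yields an element of \<open>\<Sigma>[x]\<^sub>2\<^sub>m\<close>. When \<open>g = 0\<close>, coprimality forces \<open>q\<close>
  and hence, by the degree condition, \<open>p\<close> to be constant.\<close>

lemma poly_cong_iff_dvd: "poly_cong a b g \<longleftrightarrow> g dvd a - b"
  unfolding poly_cong_def by (auto simp: algebra_simps elim!: dvdE)

lemma is_sos_add: "is_sos a \<Longrightarrow> is_sos b \<Longrightarrow> is_sos (a + b)"
proof -
  assume "is_sos a" "is_sos b"
  then obtain fs gs where "a = (\<Sum>f\<leftarrow>fs. f ^ 2)" "b = (\<Sum>f\<leftarrow>gs. f ^ 2)"
    unfolding is_sos_def by blast
  then show "is_sos (a + b)" unfolding is_sos_def by (intro exI[of _ "fs @ gs"]) simp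
qed

lemma is_sos_square_mult: "is_sos b \<Longrightarrow> is_sos (f ^ 2 * b)"
proof -
  assume "is_sos b"
  then obtain hs where hs: "b = (\<Sum>h\<leftarrow>hs. h ^ 2)" unfolding is_sos_def by blast
  have "f ^ 2 * b = (\<Sum>h\<leftarrow>map ((*) f) hs. h ^ 2)"
    unfolding hs by (simp add: sum_list_const_mult[symmetric] o_def power_mult_distrib)
  then show "is_sos (f ^ 2 * b)" unfolding is_sos_def by blast
qed

lemma is_sos_mult: "is_sos a \<Longrightarrow> is_sos b \<Longrightarrow> is_sos (a * b)"
proof -
  assume "is_sos a" "is_sos b"
  then obtain fs where "a = (\<Sum>f\<leftarrow>fs. f ^ 2)" unfolding is_sos_def by blast
  moreover have "is_sos ((\<Sum>f\<leftarrow>fs. f ^ 2) * b)"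
  proof (induction fs)
    case Nil
    show ?case unfolding is_sos_def by (auto intro: exI[of _ "[]"])
  next
    case (Cons f fs)
    then show ?case
      using is_sos_add[OF is_sos_square_mult[OF \<open>is_sos b\<close>, of f]] by (simp add: distrib_right)
  qed
  ultimately show "is_sos (a * b)" by simp
qed

lemma is_sos_poly_nonneg: "is_sos p \<Longrightarrow> poly p x \<ge> 0"
proof -
  have "poly (\<Sum>f\<leftarrow>fs. f ^ 2) x \<ge> 0" for fs :: "real poly list"
    by (induction fs) auto
  then show "is_sos p \<Longrightarrow> poly p x \<ge> 0" unfolding is_sos_def by blast
qed

lemma const_in_sos_cone: "c \<ge> 0 \<Longrightarrow> [:c:] \<in> sos_cone k"
  unfolding sos_cone_def
  by (intro CollectI exI[of _ "[[:sqrt c:]]"]) (simp add: power2_eq_square)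

lemma dvd_sum_squares_diff_mod:
  fixes g :: "'a :: euclidean_ring"
  shows "g dvd (\<Sum>r\<leftarrow>rs. r ^ 2) - (\<Sum>r\<leftarrow>rs. (r mod g) ^ 2)"
proof (induction rs)
  case (Cons r rs)
  have "g dvd r - r mod g"
    by (simp add: minus_mod_eq_mult_div)
  then have "g dvd r ^ 2 - (r mod g) ^ 2"
    by (metis dvd_mult2 power2_eq_square square_diff_square_factored mult.commute)
  from dvd_add[OF this Cons.IH] show ?case by (simp add: algebra_simps)
qed simp

lemma is_sos_cong_sos_cone:
  assumes "is_sos a" and "g \<noteq> 0"
  shows "\<exists>s \<in> sos_cone (2 * degree g). g dvd a - s"
proof -
  obtain rs where rs: "a = (\<Sum>r\<leftarrow>rs. r ^ 2)" using assms(1) unfolding is_sos_def by blast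
  define s where "s = (\<Sum>r\<leftarrow>map (\<lambda>r. r mod g) rs. r ^ 2)"
  have "2 * degree (r mod g) \<le> 2 * degree g" for r
    using degree_mod_less[OF assms(2), of r] by (cases "r mod g = 0") auto
  then have "s \<in> sos_cone (2 * degree g)"
    unfolding sos_cone_def s_def by (intro CollectI exI[of _ "map (\<lambda>r. r mod g) rs"]) auto
  moreover have "g dvd a - s"
    unfolding rs s_def using dvd_sum_squares_diff_mod by (simp add: o_def)
  ultimately show ?thesis by blast
qed

lemma sos_cong_sos_cone_mult_coprime:
  assumes "is_sos p" and "is_sos q" and "coprime g q" and "g \<noteq> 0"
  shows "\<exists>s \<in> sos_cone (2 * degree g). g dvd p - s * q"
proof -
  obtain u v where uv: "v * g + u * q = 1"
    using bezout_coefficients_fst_snd[of g q] assms(3) by (metis coprime_imp_gcd_eq_1)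
  have "is_sos (p * (u ^ 2 * q))"
    using is_sos_mult[OF assms(1) is_sos_square_mult[OF assms(2)]] .
  then obtain s where s: "s \<in> sos_cone (2 * degree g)" and "g dvd p * (u ^ 2 * q) - s"
    using is_sos_cong_sos_cone assms(4) by blast
  then have reduced: "g dvd (p * (u ^ 2 * q) - s) * q" by simp
  have "1 - u * q = v * g" using uv by (simp add: algebra_simps)
  then have inverse: "g dvd p * (1 + u * q) * (1 - u * q)" by simp
  have "p - s * q = p * (1 + u * q) * (1 - u * q) + (p * (u ^ 2 * q) - s) * q"
    by (simp add: algebra_simps power2_eq_square)
  then have "g dvd p - s * q" using dvd_add[OF inverse reduced] by simp
  with s show ?thesis by blast
qed

theorem lemma3p9:
  fixes g p q :: "real poly" and m d :: nat
  assumes "degree g = m"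
    and "degree p = 2 * d"
    and "int (degree q) = 2 * int d - 2 * int m"
    and "is_sos p" and "is_sos q"
    and "coprime g q"
  shows "\<exists>s \<in> sos_cone (2 * m). poly_cong p (s * q) g"
proof (cases "g = 0")
  case True
  then have "is_unit q" using assms(6) by simp
  then obtain c where q: "q = [:c:]" and "c \<noteq> 0"
    by (metis is_unit_iff_degree not_is_unit_0 degree_eq_zeroE pCons_0_0)
  with True assms(1-3) have "degree p = 0" by simp
  then obtain a where p: "p = [:a:]" by (rule degree_eq_zeroE)
  have "a \<ge> 0" "c \<ge> 0"
    using is_sos_poly_nonneg[OF assms(4)] is_sos_poly_nonneg[OF assms(5)] p q by auto
  with \<open>c \<noteq> 0\<close> have "[:a / c:] \<in> sos_cone (2 * m)" and "p = [:a / c:] * q"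
    using p q by (auto simp: const_in_sos_cone)
  with True show ?thesis unfolding poly_cong_iff_dvd by (intro bexI[of _ "[:a / c:]"]) auto
next
  case False
  then show ?thesis
    using sos_cong_sos_cone_mult_coprime[OF assms(4-6)] assms(1) unfolding poly_cong_iff_dvd by blast
qed

end
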